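(* For $1\le i\le n$, \[ \mathcal{S}_{0,i}:=\partial_{\vartheta_0}\bigl(x_1^{n-1}x_2^{n-2}\cdots x_{n-1}\,\omega_i\bigr) = \sum_{\ell = i}^{n} (-1)^{\ell+i}\, h_{\ell-i}(x_\ell,\dots,x_n)\,\omega_\ell , \] where $h_j(x_\ell,\dots,x_n)$ is the $j$-th complete homogeneous symmetric polynomial in $x_\ell,\dots,x_n$.
   Context: $R=\mathbb{Z}[x_1,\dots,x_n]\otimes\bigwedge^\bullet(\omega_1,\dots,\omega_n)$ is supercommutative with $x_i$ even and $\omega_i$ odd. $S_n$ acts on $R$ by ring automorphisms with $s_i(x_j)=x_{s_i(j)}$ and $s_i(\omega_j)=\omega_j+\delta_{ij}(x_i-x_{i+1})\omega_{i+1}$. The Demazure operators are $\partial_i(f)=(f-s_i(f))/(x_i-x_{i+1})$, and for $\vartheta\in S_n$ with reduced expression $s_{i_1}\cdots s_{i_r}$, $\partial_\vartheta=\partial_{i_1}\cdots\partial_{i_r}$ (independent of the reduced expression). $\vartheta_0$ is the longest element of $S_n$. *)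

theory Defs
  imports "HOL-Library.Poly_Mapping" "HOL-Combinatorics.Transposition"
begin

text \<open>Polynomials in Z[x_1, x_2, ...]: finitely supported maps from monomials
  (exponent vectors nat =>0 nat) to integer coefficients.\<close>
type_synonym mpoly = "(nat \<Rightarrow>\<^sub>0 nat) \<Rightarrow>\<^sub>0 int"

definition var :: "nat \<Rightarrow> mpoly" where
  "var i = Poly_Mapping.single (Poly_Mapping.single i 1) 1"

definition swap_poly :: "nat \<Rightarrow> mpoly \<Rightarrow> mpoly" where
  "swap_poly i p = Poly_Mapping.map_key (\<lambda>m. Poly_Mapping.map_key (transpose i (Suc i)) m) p"

text \<open>Elements of R = Z[x] (x) Lambda(omega_1..omega_n), as a Z[x]-module:
  f T is the coefficient of omega_T = omega_{t1} ^ ... ^ omega_{tk} (t1 < ... < tk, T = {t1..tk}).\<close>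
type_synonym relt = "nat set \<Rightarrow> mpoly"

definition omega_times :: "mpoly \<Rightarrow> nat \<Rightarrow> relt" where
  "omega_times p j = (\<lambda>T. if T = {j} then p else 0)"

text \<open>The ring automorphism s_i of R (x_j |-> x_{s_i(j)},
  omega_j |-> omega_j + delta_{ij}(x_i - x_{i+1}) omega_{i+1}), written out on the basis
  omega_T: s_i(p omega_T) = s_i(p) omega_T + [i in T, i+1 notin T] s_i(p)(x_i - x_{i+1}) omega_{T-{i} u {i+1}}.\<close>
definition s_act :: "nat \<Rightarrow> relt \<Rightarrow> relt" where
  "s_act i f = (\<lambda>T. swap_poly i (f T) +
      (if Suc i \<in> T \<and> i \<notin> T
       then (var i - var (Suc i)) * swap_poly i (f (insert i (T - {Suc i}))) else 0))"

definition demazure :: "nat \<Rightarrow> relt \<Rightarrow> relt" where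
  "demazure i f = (THE g. \<forall>T. (var i - var (Suc i)) * g T = f T - s_act i f T)"

text \<open>Permutations of {1..n} as functions nat => nat; word products of simple transpositions.\<close>
definition word_prod :: "nat list \<Rightarrow> nat \<Rightarrow> nat" where
  "word_prod w = foldr (\<lambda>i p. transpose i (Suc i) \<circ> p) w id"

definition reduced_word :: "nat \<Rightarrow> (nat \<Rightarrow> nat) \<Rightarrow> nat list \<Rightarrow> bool" where
  "reduced_word n \<sigma> w \<longleftrightarrow> set w \<subseteq> {1..<n} \<and> word_prod w = \<sigma> \<and>
     (\<forall>w'. set w' \<subseteq> {1..<n} \<and> word_prod w' = \<sigma> \<longrightarrow> length w \<le> length w')"

definition demazure_perm :: "nat \<Rightarrow> (nat \<Rightarrow> nat) \<Rightarrow> relt \<Rightarrow> relt" where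
  "demazure_perm n \<sigma> f = foldr demazure (SOME w. reduced_word n \<sigma> w) f"

definition longest :: "nat \<Rightarrow> nat \<Rightarrow> nat" where
  "longest n = (\<lambda>j. if 1 \<le> j \<and> j \<le> n then n + 1 - j else j)"

definition complete_h :: "nat \<Rightarrow> nat set \<Rightarrow> mpoly" where
  "complete_h d A = (\<Sum>m \<in> {m. Poly_Mapping.keys m \<subseteq> A \<and> (\<Sum>k\<in>A. Poly_Mapping.lookup m k) = d}.
      Poly_Mapping.single m 1)"

definition staircase :: "nat \<Rightarrow> mpoly" where
  "staircase n = (\<Prod>k=1..n. var k ^ (n - k))"

end

theory Submission
  imports Defs "HOL.Modules" "HOL-Library.Function_Algebras" "HOL-Library.FuncSet"
begin

text \<open>On one-forms \<open>\<Sum>\<^sub>l v\<^sub>l \<omega>\<^sub>l\<close> the operators \<open>s\<^sub>k\<close> act semilinearly and \<open>\<partial>\<^sub>k\<close> acts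
  coefficientwise up to a correction in position \<open>k + 1\<close>. Clearing the Vandermonde denominator
  \<open>(x\<^sub>i - x\<^sub>i\<^sub>+\<^sub>1)(x\<^sub>i\<^sub>+\<^sub>1 - x\<^sub>i\<^sub>+\<^sub>2)(x\<^sub>i - x\<^sub>i\<^sub>+\<^sub>2)\<close> reduces the braid relations of the \<open>\<partial>\<^sub>k\<close>
  to those of the \<open>s\<^sub>k\<close>, so by Matsumoto's theorem \<open>\<partial>\<^bsub>\<vartheta>\<^sub>0\<^esub>\<close> may be evaluated along the
  reduced word \<open>(s\<^sub>n\<^sub>-\<^sub>1 \<cdots> s\<^sub>1)(s\<^sub>n\<^sub>-\<^sub>1 \<cdots> s\<^sub>2) \<cdots> s\<^sub>n\<^sub>-\<^sub>1\<close>. By downward induction on \<open>m\<close>, the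
  word for \<open>{m..n}\<close> sends \<open>x\<^sub>m\<^sup>n\<^sup>-\<^sup>m \<cdots> x\<^sub>n\<^sub>-\<^sub>1 \<omega>\<^sub>i\<close> to \<open>\<omega>\<^sub>i\<close> for \<open>i < m\<close> and to
  \<open>S\<^sub>0\<^sub>,\<^sub>i\<close> otherwise: the factor \<open>x\<^sub>m\<^sup>n\<^sup>-\<^sup>m\<close> commutes with the operators for \<open>{m+1..n}\<close>,
  the forms \<open>\<omega>\<^sub>i\<close> (\<open>i < m\<close>) and \<open>S\<^sub>0\<^sub>,\<^sub>i\<close> (\<open>i > m\<close>) are killed by \<open>\<partial>\<^sub>m, \<dots>, \<partial>\<^sub>n\<^sub>-\<^sub>1\<close>,
  and \<open>\<partial>\<^sub>n\<^sub>-\<^sub>1 \<cdots> \<partial>\<^sub>m\<close> turns \<open>x\<^sub>m\<^sup>n\<^sup>-\<^sup>m \<omega>\<^sub>m\<close> into \<open>S\<^sub>0\<^sub>,\<^sub>m\<close> because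
  \<open>\<partial>\<^sub>k h\<^sub>e\<^sub>+\<^sub>1(x\<^sub>k, A) = h\<^sub>e(x\<^sub>k, x\<^sub>k\<^sub>+\<^sub>1, A)\<close>.\<close>

abbreviation adj_swap :: "nat \<Rightarrow> nat \<Rightarrow> nat" where
  "adj_swap k \<equiv> transpose k (Suc k)"

definition swap_monom :: "nat \<Rightarrow> (nat \<Rightarrow>\<^sub>0 nat) \<Rightarrow> (nat \<Rightarrow>\<^sub>0 nat)" where
  "swap_monom k m = Poly_Mapping.map_key (adj_swap k) m"

lemma lookup_swap_monom: "Poly_Mapping.lookup (swap_monom k m) j = Poly_Mapping.lookup m (adj_swap k j)"
  unfolding swap_monom_def by (simp add: map_key.rep_eq inj_transpose)

lemma swap_monom_swap_monom [simp]: "swap_monom k (swap_monom k m) = m"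
  by (rule poly_mapping_eqI) (simp add: lookup_swap_monom)

lemma inj_swap_monom: "inj (swap_monom k)"
  by (metis injI swap_monom_swap_monom)

lemma swap_monom_add: "swap_monom k (a + b) = swap_monom k a + swap_monom k b"
  unfolding swap_monom_def by (simp add: map_key_plus inj_transpose)

lemma swap_monom_single: "swap_monom k (Poly_Mapping.single j e) = Poly_Mapping.single (adj_swap k j) e"
  by (rule poly_mapping_eqI) (auto simp: lookup_swap_monom lookup_single when_def transpose_eq_iff)

lemma keys_swap_monom: "Poly_Mapping.keys (swap_monom k m) = adj_swap k ` Poly_Mapping.keys m"
  by (auto simp: in_keys_iff lookup_swap_monom image_iff intro!: bexI[of _ "adj_swap k x" for x])

lemma swap_poly_map_key: "swap_poly k p = Poly_Mapping.map_key (swap_monom k) p"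
  unfolding swap_poly_def swap_monom_def ..

lemma lookup_swap_poly: "Poly_Mapping.lookup (swap_poly k p) m = Poly_Mapping.lookup p (swap_monom k m)"
  unfolding swap_poly_map_key by (simp add: map_key.rep_eq inj_swap_monom)

lemma swap_poly_single: "swap_poly k (Poly_Mapping.single m c) = Poly_Mapping.single (swap_monom k m) c"
  by (rule poly_mapping_eqI) (auto simp: lookup_swap_poly lookup_single when_def dest: inj_onD[OF inj_swap_monom])

lemma swap_poly_swap_poly [simp]: "swap_poly k (swap_poly k p) = p"
  by (rule poly_mapping_eqI) (simp add: lookup_swap_poly)

lemma swap_poly_add: "swap_poly k (p + q) = swap_poly k p + swap_poly k q"
  by (rule poly_mapping_eqI) (simp add: lookup_swap_poly lookup_add)

lemma swap_poly_zero [simp]: "swap_poly k 0 = 0"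
  by (rule poly_mapping_eqI) (simp add: lookup_swap_poly)

lemma swap_poly_minus: "swap_poly k (- p) = - swap_poly k p"
  by (rule poly_mapping_eqI) (simp add: lookup_swap_poly)

lemma swap_poly_diff: "swap_poly k (p - q) = swap_poly k p - swap_poly k q"
  by (rule poly_mapping_eqI) (simp add: lookup_swap_poly lookup_minus)

lemma swap_poly_mult: "swap_poly k (p * q) = swap_poly k p * swap_poly k q"
proof -
  have monom: "swap_poly k (p * frag_of b) = swap_poly k p * swap_poly k (frag_of b)" for b
    using subset_UNIV
    by (induction p rule: frag_induction)
       (simp_all add: mult_single swap_poly_single swap_monom_add left_diff_distrib swap_poly_diff)
  show ?thesis
    using subset_UNIV
    by (induction q rule: frag_induction) (simp_all add: monom right_diff_distrib swap_poly_diff)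
qed

lemma swap_poly_one [simp]: "swap_poly k 1 = 1"
  by (metis single_one swap_poly_single swap_monom_def map_key_zero inj_transpose)

lemma swap_poly_var: "swap_poly k (var j) = var (adj_swap k j)"
  unfolding var_def by (simp add: swap_poly_single swap_monom_single)

lemma swap_poly_power: "swap_poly k (p ^ e) = swap_poly k p ^ e"
  by (induction e) (simp_all add: swap_poly_mult)

lemma swap_poly_sum: "swap_poly k (sum f A) = (\<Sum>a\<in>A. swap_poly k (f a))"
  by (induction A rule: infinite_finite_induct) (simp_all add: swap_poly_add)

lemma swap_poly_sign: "swap_poly k ((-1) ^ e * p) = (-1) ^ e * swap_poly k p"
  by (simp add: swap_poly_mult swap_poly_power swap_poly_minus)

lemma swap_poly_commute:
  assumes "Suc i < j \<or> Suc j < i"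
  shows "swap_poly i (swap_poly j p) = swap_poly j (swap_poly i p)"
proof (rule poly_mapping_eqI)
  fix m
  have "swap_monom j (swap_monom i m) = swap_monom i (swap_monom j m)"
    using assms by (intro poly_mapping_eqI) (auto simp: lookup_swap_monom transpose_def)
  then show "Poly_Mapping.lookup (swap_poly i (swap_poly j p)) m =
      Poly_Mapping.lookup (swap_poly j (swap_poly i p)) m"
    by (simp add: lookup_swap_poly)
qed

lemma swap_poly_braid:
  "swap_poly i (swap_poly (Suc i) (swap_poly i p)) = swap_poly (Suc i) (swap_poly i (swap_poly (Suc i) p))"
proof (rule poly_mapping_eqI)
  fix m
  have "swap_monom i (swap_monom (Suc i) (swap_monom i m)) =
      swap_monom (Suc i) (swap_monom i (swap_monom (Suc i) m))"
    by (intro poly_mapping_eqI) (auto simp: lookup_swap_monom transpose_def)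
  then show "Poly_Mapping.lookup (swap_poly i (swap_poly (Suc i) (swap_poly i p))) m =
      Poly_Mapping.lookup (swap_poly (Suc i) (swap_poly i (swap_poly (Suc i) p))) m"
    by (simp add: lookup_swap_poly)
qed

subsection \<open>Divided differences of polynomials\<close>

definition simple_root :: "nat \<Rightarrow> mpoly" where
  "simple_root k = var k - var (Suc k)"

lemma var_inject: "var a = var b \<longleftrightarrow> a = b"
  unfolding var_def by (metis frag_of_eq lookup_single_eq lookup_single_not_eq one_neq_zero)

lemma simple_root_nonzero: "simple_root k \<noteq> 0"
  by (simp add: simple_root_def var_inject)

lemma swap_poly_simple_root_self: "swap_poly k (simple_root k) = - simple_root k"
  by (simp add: simple_root_def swap_poly_diff swap_poly_var)

lemma swap_poly_simple_root_adjacent: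
  "j = Suc i \<or> i = Suc j \<Longrightarrow> swap_poly i (simple_root j) = simple_root i + simple_root j"
  by (auto simp: simple_root_def swap_poly_diff swap_poly_var)

lemma swap_poly_simple_root_far:
  "Suc i < j \<or> Suc j < i \<Longrightarrow> swap_poly i (simple_root j) = simple_root j"
  by (auto simp: simple_root_def swap_poly_diff swap_poly_var transpose_def)

lemma frag_of_single_eq_var_power: "frag_of (Poly_Mapping.single a e) = var a ^ e"
proof (induction e)
  case (Suc e)
  have "frag_of (Poly_Mapping.single a (Suc e)) =
      frag_of (Poly_Mapping.single a 1 + Poly_Mapping.single a e)"
    by (simp flip: single_add)
  also have "\<dots> = var a * frag_of (Poly_Mapping.single a e)"
    by (simp add: var_def mult_single)
  finally show ?case using Suc by simp
qed simp

lemma simple_root_dvd_swap_diff: "simple_root k dvd p - swap_poly k p"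
proof -
  let ?P = "\<lambda>p. simple_root k dvd p - swap_poly k p"
  have mult: "?P (p * q)" if "?P p" "?P q" for p q
  proof -
    have "p * q - swap_poly k (p * q) = (p - swap_poly k p) * q + swap_poly k p * (q - swap_poly k q)"
      by (simp add: swap_poly_mult algebra_simps)
    then show ?thesis using that by (simp add: dvd_add dvd_mult dvd_mult2)
  qed
  have power: "?P (p ^ e)" if "?P p" for p e
    using that by (induction e) (simp_all add: mult)
  have var: "?P (var j)" for j
  proof -
    have "var j - swap_poly k (var j) \<in> {0, simple_root k, - simple_root k}"
      by (auto simp: swap_poly_var simple_root_def transpose_def)
    then show ?thesis by auto
  qed
  have monom: "?P (frag_of m)" for m
  proof (induction m rule: update_induct)
    case (update f a b)
    have "Poly_Mapping.update a b f = f + Poly_Mapping.single a b"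
      using update.hyps(1)
      by (intro poly_mapping_eqI) (auto simp: lookup_update lookup_add lookup_single in_keys_iff when_def)
    then have "frag_of (Poly_Mapping.update a b f) = frag_of f * var a ^ b"
      by (simp add: mult_single flip: frag_of_single_eq_var_power)
    then show ?case using update.IH mult power var by metis
  qed simp
  show ?thesis
    using subset_UNIV
  proof (induction p rule: frag_induction)
    case (diff a b)
    have "a - b - swap_poly k (a - b) = (a - swap_poly k a) - (b - swap_poly k b)"
      by (simp add: swap_poly_diff)
    then show ?case using diff by (metis dvd_diff)
  qed (simp_all add: monom)
qed

definition divdiff :: "nat \<Rightarrow> mpoly \<Rightarrow> mpoly" where
  "divdiff k p = (SOME q. p - swap_poly k p = simple_root k * q)"

lemma divdiff: "p - swap_poly k p = simple_root k * divdiff k p"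
  unfolding divdiff_def using simple_root_dvd_swap_diff[of k p] by (rule someI_ex[OF dvdE]) blast

lemma divdiff_eqI: "p - swap_poly k p = simple_root k * q \<Longrightarrow> divdiff k p = q"
  using divdiff[of p k] simple_root_nonzero[of k] by simp

lemma divdiff_eq_0: "swap_poly k p = p \<Longrightarrow> divdiff k p = 0"
  by (rule divdiff_eqI) simp

lemma divdiff_minus: "divdiff k (- p) = - divdiff k p"
  by (rule divdiff_eqI) (simp add: swap_poly_minus flip: divdiff)

lemma divdiff_swap_poly: "divdiff k (swap_poly k p) = - divdiff k p"
  by (rule divdiff_eqI) (simp flip: divdiff)

lemma divdiff_mult_symmetric: "swap_poly k c = c \<Longrightarrow> divdiff k (c * p) = c * divdiff k p"
  by (rule divdiff_eqI) (simp add: swap_poly_mult algebra_simps flip: divdiff)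

lemma divdiff_sign: "divdiff k ((-1) ^ e * p) = (-1) ^ e * divdiff k p"
  by (rule divdiff_mult_symmetric) (simp add: swap_poly_power swap_poly_minus)

lemma divdiff_one [simp]: "divdiff k 1 = 0"
  by (simp add: divdiff_eq_0)

lemma divdiff_zero [simp]: "divdiff k 0 = 0"
  by (simp add: divdiff_eq_0)

subsection \<open>Divided differences in modules with a compatible action\<close>

locale swap_module = module scale
  for scale :: "mpoly \<Rightarrow> 'm::ab_group_add \<Rightarrow> 'm" (infixr \<open>*s\<close> 75) +
  fixes act :: "nat \<Rightarrow> 'm \<Rightarrow> 'm"
  assumes act_add: "act k (x + y) = act k x + act k y"
    and act_scale: "act k (p *s x) = swap_poly k p *s act k x"
    and act_act [simp]: "act k (act k x) = x"
    and act_commute: "Suc i < j \<Longrightarrow> act i (act j x) = act j (act i x)"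
    and act_braid: "act i (act (Suc i) (act i x)) = act (Suc i) (act i (act (Suc i) x))"
    and act_divisible: "\<exists>y. x - act k x = simple_root k *s y"
    and scale_cancel: "p \<noteq> 0 \<Longrightarrow> p *s x = p *s y \<Longrightarrow> x = y"
begin

lemma act_diff: "act k (x - y) = act k x - act k y"
  by (rule additive.diff) (unfold_locales, rule act_add)

definition ddiff :: "nat \<Rightarrow> 'm \<Rightarrow> 'm" where
  "ddiff k x = (SOME y. x - act k x = simple_root k *s y)"

lemma ddiff: "x - act k x = simple_root k *s ddiff k x"
  unfolding ddiff_def using act_divisible by (rule someI_ex)

lemma ddiff_eqI: "x - act k x = simple_root k *s y \<Longrightarrow> ddiff k x = y"
  using ddiff[of x k] simple_root_nonzero[of k] by (metis scale_cancel)

lemma act_ddiff: "act k (ddiff k x) = ddiff k x"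
proof (rule scale_cancel[OF simple_root_nonzero])
  have "- (simple_root k *s act k (ddiff k x)) = act k (simple_root k *s ddiff k x)"
    by (simp add: act_scale swap_poly_simple_root_self)
  also have "\<dots> = - (simple_root k *s ddiff k x)"
    by (simp add: act_diff flip: ddiff)
  finally show "simple_root k *s act k (ddiff k x) = simple_root k *s ddiff k x"
    by simp
qed

lemma ddiff_scale: "ddiff k (p *s x) = divdiff k p *s x + swap_poly k p *s ddiff k x"
proof (rule ddiff_eqI)
  have "simple_root k *s (divdiff k p *s x + swap_poly k p *s ddiff k x) =
      (p - swap_poly k p) *s x + swap_poly k p *s (x - act k x)"
    by (simp add: scale_right_distrib ddiff mult.commute flip: divdiff)
  then show "p *s x - act k (p *s x) = simple_root k *s (divdiff k p *s x + swap_poly k p *s ddiff k x)"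
    by (simp add: act_scale algebra_simps)
qed

lemma ddiff_scale_symmetric: "swap_poly k p = p \<Longrightarrow> ddiff k (p *s x) = p *s ddiff k x"
  by (simp add: ddiff_scale divdiff_eq_0)

lemma ddiff_scale_of_ddiff_0: "ddiff k x = 0 \<Longrightarrow> ddiff k (p *s x) = divdiff k p *s x"
  by (simp add: ddiff_scale)

lemma foldr_ddiff_scale_symmetric:
  "(\<And>k. k \<in> set ks \<Longrightarrow> swap_poly k p = p) \<Longrightarrow> foldr ddiff ks (p *s x) = p *s foldr ddiff ks x"
  by (induction ks) (simp_all add: ddiff_scale_symmetric)

lemma foldr_ddiff_scale_of_ddiff_0:
  "(\<And>k. k \<in> set ks \<Longrightarrow> ddiff k x = 0) \<Longrightarrow> foldr ddiff ks (p *s x) = foldr divdiff ks p *s x"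
  by (induction ks) (simp_all add: ddiff_scale_of_ddiff_0)

lemma scale_roots_ddiff_ddiff_far:
  assumes "Suc i < j \<or> Suc j < i"
  shows "(simple_root i * simple_root j) *s ddiff i (ddiff j x) = (x - act j x) - act i (x - act j x)"
proof -
  have "(simple_root i * simple_root j) *s ddiff i (ddiff j x) =
      simple_root j *s (ddiff j x - act i (ddiff j x))"
    by (simp add: ddiff mult.commute)
  also have "\<dots> = simple_root j *s ddiff j x - act i (simple_root j *s ddiff j x)"
    using assms by (simp add: scale_right_diff_distrib act_scale swap_poly_simple_root_far)
  finally show ?thesis by (simp flip: ddiff)
qed

lemma ddiff_commute:
  assumes "Suc i < j"
  shows "ddiff i (ddiff j x) = ddiff j (ddiff i x)"
proof (rule scale_cancel)
  show "simple_root i * simple_root j \<noteq> 0" by (simp add: simple_root_nonzero)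
  have "(x - act j x) - act i (x - act j x) = (x - act i x) - act j (x - act i x)"
    using act_commute[OF assms] by (simp add: act_diff)
  then show "(simple_root i * simple_root j) *s ddiff i (ddiff j x) =
      (simple_root i * simple_root j) *s ddiff j (ddiff i x)"
    using assms scale_roots_ddiff_ddiff_far[of i j x] scale_roots_ddiff_ddiff_far[of j i x]
    by (simp add: mult.commute)
qed

text \<open>The identity behind the braid relation: on clearing the Vandermonde denominator, a product
  of three divided differences becomes the alternating sum over the subgroup generated by two
  adjacent transpositions, which is symmetric in them.\<close>

lemma scale_vandermonde_ddiff_ddiff_ddiff:
  fixes x :: 'm
  assumes adj: "j = Suc i \<or> i = Suc j"
  defines "\<alpha> \<equiv> simple_root i" and "\<beta> \<equiv> simple_root j"
  defines "u \<equiv> x - act i x"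
  shows "(\<alpha> * \<beta> * (\<alpha> + \<beta>)) *s ddiff i (ddiff j (ddiff i x)) = u - act j u + act i (act j u)"
proof -
  have si: "swap_poly i \<beta> = \<alpha> + \<beta>" "swap_poly i (\<alpha> + \<beta>) = \<beta>"
    using adj by (simp_all add: \<alpha>_def \<beta>_def swap_poly_add swap_poly_simple_root_self
        swap_poly_simple_root_adjacent)
  have sj: "swap_poly j \<alpha> = \<alpha> + \<beta>"
    using adj by (auto simp: \<alpha>_def \<beta>_def simple_root_def swap_poly_diff swap_poly_var)
  define z where "z = ddiff i x"
  define y where "y = ddiff j z"
  have u: "u = \<alpha> *s z" and z: "act i z = z"
    by (simp_all add: u_def z_def \<alpha>_def ddiff act_ddiff)
  have y: "\<beta> *s y = z - act j z"
    by (simp add: y_def \<beta>_def ddiff)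
  have "(\<alpha> * \<beta> * (\<alpha> + \<beta>)) *s ddiff i y = (\<beta> * (\<alpha> + \<beta>)) *s (y - act i y)"
    by (simp add: \<alpha>_def ddiff mult_ac)
  also have "\<dots> = (\<alpha> + \<beta>) *s (\<beta> *s y) - \<beta> *s ((\<alpha> + \<beta>) *s act i y)"
    by (simp add: scale_right_diff_distrib mult_ac)
  also have "\<dots> = (\<alpha> + \<beta>) *s (z - act j z) - \<beta> *s act i (z - act j z)"
    by (simp add: y act_scale si flip: y)
  also have "\<dots> = \<alpha> *s z - (\<alpha> + \<beta>) *s act j z + \<beta> *s act i (act j z)"
    by (simp add: act_diff z algebra_simps)
  also have "\<dots> = u - act j u + act i (act j u)"
    by (simp add: u act_scale si sj)
  finally show ?thesis by (simp add: z_def y_def)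
qed

lemma ddiff_braid: "ddiff i (ddiff (Suc i) (ddiff i x)) = ddiff (Suc i) (ddiff i (ddiff (Suc i) x))"
proof (rule scale_cancel)
  let ?V = "simple_root i * simple_root (Suc i) * (simple_root i + simple_root (Suc i))"
  show "?V \<noteq> 0"
    by (simp add: simple_root_nonzero simple_root_def var_inject)
  have V: "?V = simple_root (Suc i) * simple_root i * (simple_root (Suc i) + simple_root i)"
    by (simp add: algebra_simps)
  let ?s = "act i" and ?t = "act (Suc i)"
  have "?V *s ddiff i (ddiff (Suc i) (ddiff i x)) = (x - ?s x) - ?t (x - ?s x) + ?s (?t (x - ?s x))"
    by (rule scale_vandermonde_ddiff_ddiff_ddiff) simp
  also have "\<dots> = (x - ?t x) - ?s (x - ?t x) + ?t (?s (x - ?t x))"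
    by (simp add: act_diff act_braid)
  also have "\<dots> = ?V *s ddiff (Suc i) (ddiff i (ddiff (Suc i) x))"
    unfolding V by (rule scale_vandermonde_ddiff_ddiff_ddiff[symmetric]) simp
  finally show "?V *s ddiff i (ddiff (Suc i) (ddiff i x)) =
      ?V *s ddiff (Suc i) (ddiff i (ddiff (Suc i) x))" .
qed

end

text \<open>A one-form \<open>\<Sum>\<^sub>l v l \<omega>\<^sub>l\<close> is represented by its coefficient vector \<open>v\<close>; since
  \<open>s\<^sub>k \<omega>\<^sub>k = \<omega>\<^sub>k + (x\<^sub>k - x\<^sub>k\<^sub>+\<^sub>1) \<omega>\<^sub>k\<^sub>+\<^sub>1\<close>, applying \<open>s\<^sub>k\<close> moves a multiple of the
  \<open>k\<close>-th coefficient into position \<open>k + 1\<close>.\<close>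

definition swap_form :: "nat \<Rightarrow> (nat \<Rightarrow> mpoly) \<Rightarrow> nat \<Rightarrow> mpoly" where
  "swap_form k v = (\<lambda>l. swap_poly k (v l) + (if l = Suc k then simple_root k * swap_poly k (v k) else 0))"

definition one_form :: "(nat \<Rightarrow> mpoly) \<Rightarrow> relt" where
  "one_form v = (\<lambda>T. if card T = 1 then v (the_elem T) else 0)"

lemma one_form_singleton [simp]: "one_form v {l} = v l"
  by (simp add: one_form_def)

lemma swap_form_commute:
  assumes "Suc i < j"
  shows "swap_form i (swap_form j v) = swap_form j (swap_form i v)"
  using assms
  by (auto simp: fun_eq_iff swap_form_def swap_poly_add swap_poly_mult swap_poly_commute
      swap_poly_simple_root_far)

lemma swap_form_braid:
  "swap_form i (swap_form (Suc i) (swap_form i v)) = swap_form (Suc i) (swap_form i (swap_form (Suc i) v))"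
  by (auto simp: fun_eq_iff swap_form_def swap_poly_add swap_poly_mult swap_poly_braid
      swap_poly_simple_root_self swap_poly_simple_root_adjacent algebra_simps)

lemma swap_form_divisible: "v - swap_form k v = (\<lambda>l. simple_root k *
    (divdiff k (v l) - (if l = Suc k then swap_poly k (v k) else 0)))"
  by (auto simp: fun_eq_iff swap_form_def right_diff_distrib simp flip: divdiff)

interpretation one_forms: swap_module "\<lambda>p v l. p * v l" swap_form
proof
  fix k i :: nat and p :: mpoly and v w :: "nat \<Rightarrow> mpoly"
  show "swap_form k (v + w) = swap_form k v + swap_form k w"
    by (simp add: fun_eq_iff swap_form_def swap_poly_add algebra_simps)
  show "swap_form k (\<lambda>l. p * v l) = (\<lambda>l. swap_poly k p * swap_form k v l)"
    by (simp add: fun_eq_iff swap_form_def swap_poly_mult algebra_simps)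
  show "swap_form k (swap_form k v) = v"
    by (simp add: fun_eq_iff swap_form_def swap_poly_add swap_poly_mult swap_poly_simple_root_self)
  show "Suc i < k \<Longrightarrow> swap_form i (swap_form k v) = swap_form k (swap_form i v)"
    by (rule swap_form_commute)
  show "swap_form i (swap_form (Suc i) (swap_form i v)) =
      swap_form (Suc i) (swap_form i (swap_form (Suc i) v))"
    by (rule swap_form_braid)
  show "\<exists>w. v - swap_form k v = (\<lambda>l. simple_root k * w l)"
    by (rule exI, rule swap_form_divisible)
  show "p \<noteq> 0 \<Longrightarrow> (\<lambda>l. p * v l) = (\<lambda>l. p * w l) \<Longrightarrow> v = w"
    by (simp add: fun_eq_iff)
qed (simp_all add: fun_eq_iff algebra_simps)

lemma one_forms_ddiff:
  "one_forms.ddiff k v = (\<lambda>l. divdiff k (v l) - (if l = Suc k then swap_poly k (v k) else 0))"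
  by (rule one_forms.ddiff_eqI) (rule swap_form_divisible)

lemma insert_Diff_Suc_eq_image_adj_swap:
  "Suc k \<in> T \<Longrightarrow> k \<notin> T \<Longrightarrow> insert k (T - {Suc k}) = adj_swap k ` T"
  by (auto simp: transpose_def image_iff)

lemma s_act_one_form: "s_act k (one_form v) = one_form (swap_form k v)"
proof
  fix T
  show "s_act k (one_form v) T = one_form (swap_form k v) T"
  proof (cases "card T = 1")
    case True
    then obtain l where "T = {l}" by (rule card_1_singletonE)
    then show ?thesis by (auto simp: s_act_def swap_form_def simple_root_def)
  next
    case False
    then have "card (adj_swap k ` T) \<noteq> 1"
      by (simp add: card_image inj_on_subset[OF inj_transpose])
    then show ?thesis
      using False by (simp add: s_act_def one_form_def insert_Diff_Suc_eq_image_adj_swap)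
  qed
qed

lemma demazure_one_form: "demazure k (one_form v) = one_form (one_forms.ddiff k v)"
proof -
  have char: "simple_root k * one_form (one_forms.ddiff k v) T =
      one_form v T - s_act k (one_form v) T" for T
    unfolding s_act_one_form using one_forms.ddiff[of v k] by (simp add: one_form_def fun_eq_iff)
  show ?thesis
    unfolding demazure_def
  proof (rule the_equality)
    show "\<forall>T. (var k - var (Suc k)) * one_form (one_forms.ddiff k v) T =
        one_form v T - s_act k (one_form v) T"
      using char by (simp add: simple_root_def)
    fix g assume "\<forall>T. (var k - var (Suc k)) * g T = one_form v T - s_act k (one_form v) T"
    then have "simple_root k * g T = simple_root k * one_form (one_forms.ddiff k v) T" for T
      unfolding char by (simp add: simple_root_def)
    then show "g = one_form (one_forms.ddiff k v)"
      using simple_root_nonzero[of k] by (simp add: fun_eq_iff)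
  qed
qed

subsection \<open>Reduced words and Matsumoto's theorem\<close>

lemma word_prod_Nil [simp]: "word_prod [] = id"
  by (simp add: word_prod_def)

lemma word_prod_Cons: "word_prod (k # w) = adj_swap k \<circ> word_prod w"
  by (simp add: word_prod_def)

lemma word_prod_append: "word_prod (w @ u) = word_prod w \<circ> word_prod u"
  by (induction w) (simp_all add: word_prod_Cons o_assoc)

lemma word_prod_snoc: "word_prod (w @ [k]) = word_prod w \<circ> adj_swap k"
  by (simp add: word_prod_append word_prod_Cons)

lemma comp_adj_swap_adj_swap [simp]: "f \<circ> adj_swap k \<circ> adj_swap k = f"
  by (rule ext) simp

lemma bij_word_prod: "bij (word_prod w)"
proof (induction w)
  case (Cons k w)
  show ?case unfolding word_prod_Cons by (rule bij_comp[OF Cons.IH bij_transpose])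
qed (simp only: word_prod_Nil bij_id)

lemma word_prod_in_range:
  "set w \<subseteq> {1..<n} \<Longrightarrow> word_prod w x \<in> {1..n} \<longleftrightarrow> x \<in> {1..n}"
proof (induction w arbitrary: x)
  case (Cons k w)
  then have "adj_swap k y \<in> {1..n} \<longleftrightarrow> y \<in> {1..n}" for y
    by (auto simp: transpose_def)
  then show ?case using Cons by (simp add: word_prod_Cons)
qed simp

lemma word_prod_out_of_range:
  "set w \<subseteq> {1..<n} \<Longrightarrow> x \<notin> {1..n} \<Longrightarrow> word_prod w x = x"
  by (induction w) (auto simp: word_prod_Cons transpose_def)

definition inversions :: "nat \<Rightarrow> (nat \<Rightarrow> nat) \<Rightarrow> (nat \<times> nat) set" where
  "inversions n f = {(p, q). 1 \<le> p \<and> p < q \<and> q \<le> n \<and> f q < f p}"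

lemma finite_inversions [simp]: "finite (inversions n f)"
  by (rule finite_subset[of _ "{1..n} \<times> {1..n}"]) (auto simp: inversions_def)

text \<open>Composing with \<open>s\<^sub>k\<close> permutes the inversions other than \<open>(k, k + 1)\<close>.\<close>

lemma card_inversions_comp_adj_swap_Diff:
  assumes k: "k \<in> {1..<n}"
  shows "card (inversions n (f \<circ> adj_swap k) - {(k, Suc k)}) = card (inversions n f - {(k, Suc k)})"
proof (rule bij_betw_same_card)
  let ?swap2 = "\<lambda>(p, q). (adj_swap k p, adj_swap k q)"
  have swap2: "x \<in> inversions n (f \<circ> adj_swap k) - {(k, Suc k)} \<longleftrightarrow>
      ?swap2 x \<in> inversions n f - {(k, Suc k)}" for x
  proof (cases x)
    case (Pair p q)
    show ?thesis unfolding Pair using k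
      by (simp add: inversions_def transpose_def split: if_splits) linarith?
  qed
  have "?swap2 (?swap2 x) = x" for x
    by (cases x) simp
  then show "bij_betw ?swap2 (inversions n (f \<circ> adj_swap k) - {(k, Suc k)}) (inversions n f - {(k, Suc k)})"
    by (intro bij_betw_byWitness[where f' = ?swap2]) (use swap2 in \<open>force+\<close>)
qed

lemma card_inversions_comp_adj_swap:
  assumes k: "k \<in> {1..<n}" and "f k \<noteq> f (Suc k)"
  shows "card (inversions n (f \<circ> adj_swap k)) =
    (if f (Suc k) < f k then card (inversions n f) - 1 else Suc (card (inversions n f)))"
proof -
  have in_comp: "(k, Suc k) \<in> inversions n (f \<circ> adj_swap k) \<longleftrightarrow> f k < f (Suc k)"
    and in_f: "(k, Suc k) \<in> inversions n f \<longleftrightarrow> f (Suc k) < f k"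
    using k by (auto simp: inversions_def)
  show ?thesis
  proof (cases "f (Suc k) < f k")
    case False
    then have "(k, Suc k) \<in> inversions n (f \<circ> adj_swap k)"
      using in_comp assms(2) by simp
    then have "card (inversions n (f \<circ> adj_swap k)) > 0"
      using card_gt_0_iff by fastforce
    with False show ?thesis
      using card_inversions_comp_adj_swap_Diff[where f = f, OF k] in_comp in_f assms(2)
      by (simp add: card_Diff_singleton_if)
  qed (use card_inversions_comp_adj_swap_Diff[where f = f, OF k] in \<open>simp add: card_Diff_singleton_if in_comp in_f\<close>)
qed

lemma word_prod_neq_Suc: "word_prod w k \<noteq> word_prod w (Suc k)"
  using bij_is_inj[OF bij_word_prod] by (metis injD n_not_Suc_n)

lemma card_inversions_snoc:
  "set (w @ [k]) \<subseteq> {1..<n} \<Longrightarrow> card (inversions n (word_prod (w @ [k]))) =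
    (if word_prod w (Suc k) < word_prod w k then card (inversions n (word_prod w)) - 1
     else Suc (card (inversions n (word_prod w))))"
  by (simp add: word_prod_snoc card_inversions_comp_adj_swap word_prod_neq_Suc)

lemma card_inversions_le_length: "set w \<subseteq> {1..<n} \<Longrightarrow> card (inversions n (word_prod w)) \<le> length w"
proof (induction w rule: rev_induct)
  case Nil
  have "inversions n (\<lambda>x. x) = {}" by (auto simp: inversions_def)
  then show ?case by simp
next
  case (snoc k w)
  then show ?case using card_inversions_snoc[OF snoc.prems] by auto
qed

lemma descent_exists:
  assumes "inversions n f \<noteq> {}"
  obtains k where "k \<in> {1..<n}" "f (Suc k) < f k"
proof -
  obtain p q where pq: "1 \<le> p" "p < q" "q \<le> n" "f q < f p"
    using assms by (auto simp: inversions_def)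
  have "\<exists>k\<in>{1..<n}. f (Suc k) < f k"
  proof (rule ccontr)
    assume none: "\<not> (\<exists>k\<in>{1..<n}. f (Suc k) < f k)"
    have mono: "f k \<le> f (Suc k)" if "k \<in> {p..<q}" for k
    proof -
      have "k \<in> {1..<n}" using that pq by simp
      then show ?thesis using none by (simp add: not_less)
    qed
    have "f p \<le> f q"
      using pq(2) by (intro lift_Suc_mono_le_ivl[where N = "{p..<q}" and f = f, OF mono]) simp_all
    with pq show False by simp
  qed
  with that show thesis by blast
qed

lemma inversions_empty_imp_id:
  assumes w: "set w \<subseteq> {1..<n}" and no_inv: "inversions n (word_prod w) = {}"
  shows "word_prod w = id"
proof
  fix x
  let ?f = "word_prod w"
  have step: "?f k < ?f (Suc k)" if "k \<in> {1..<n}" for k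
    using that no_inv[unfolded inversions_def, THEN equals0D, of "(k, Suc k)"] word_prod_neq_Suc[of w k]
    by auto
  have gap: "?f p + (q - p) \<le> ?f q" if "1 \<le> p" "p \<le> q" "q \<le> n" for p q
    using that
  proof (induction q)
    case (Suc q)
    show ?case
    proof (cases "p = Suc q")
      case False
      then have "?f p + (q - p) \<le> ?f q" "?f q < ?f (Suc q)"
        using Suc step by auto
      with False Suc.prems show ?thesis by linarith
    qed simp
  qed simp
  show "?f x = id x"
  proof (cases "x \<in> {1..n}")
    case True
    then have "?f 1 \<in> {1..n}" "?f n \<in> {1..n}"
      using word_prod_in_range[OF w] by auto
    then show ?thesis
      using True gap[of 1 x] gap[of x n] by auto
  qed (simp add: word_prod_out_of_range[OF w])
qed

text \<open>The inversion number bounds the length of every word for a permutation from below and is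
  attained, so this characterises the shortest words.\<close>

definition reduced :: "nat \<Rightarrow> nat list \<Rightarrow> bool" where
  "reduced n w \<longleftrightarrow> set w \<subseteq> {1..<n} \<and> length w = card (inversions n (word_prod w))"

lemma exists_reduced_word:
  "set w \<subseteq> {1..<n} \<Longrightarrow> \<exists>c. reduced n c \<and> word_prod c = word_prod w"
proof (induction "card (inversions n (word_prod w))" arbitrary: w rule: less_induct)
  case less
  show ?case
  proof (cases "inversions n (word_prod w) = {}")
    case True
    then show ?thesis
      using inversions_empty_imp_id[OF less.prems] by (intro exI[of _ "[]"]) (simp add: reduced_def)
  next
    case False
    then obtain k where k: "k \<in> {1..<n}" "word_prod w (Suc k) < word_prod w k"
      by (rule descent_exists)
    have wk: "set (w @ [k]) \<subseteq> {1..<n}"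
      using less.prems k by auto
    have fewer: "card (inversions n (word_prod (w @ [k]))) < card (inversions n (word_prod w))"
      using card_inversions_snoc[OF wk] k False by (simp add: card_gt_0_iff)
    obtain c where c: "reduced n c" "word_prod c = word_prod (w @ [k])"
      using less.hyps[OF fewer wk] by blast
    have "reduced n (c @ [k])"
      using c k fewer card_inversions_snoc[OF wk]
      by (auto simp: reduced_def word_prod_snoc o_assoc)
    moreover have "word_prod (c @ [k]) = word_prod w"
      using c(2) by (simp add: word_prod_snoc o_assoc)
    ultimately show ?thesis by blast
  qed
qed

lemma reduced_snoc_iff:
  "reduced n (w @ [k]) \<longleftrightarrow> reduced n w \<and> k \<in> {1..<n} \<and> word_prod w k < word_prod w (Suc k)"
proof -
  have "card (inversions n (word_prod w)) \<le> length w" if "set w \<subseteq> {1..<n}"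
    using card_inversions_le_length[OF that] .
  then show ?thesis
    using card_inversions_snoc[of w k n] word_prod_neq_Suc[of w k]
    by (auto simp: reduced_def not_less_iff_gr_or_eq split: if_splits)
qed

lemma reduced_snoc_descent:
  "reduced n (w @ [k]) \<Longrightarrow> word_prod (w @ [k]) (Suc k) < word_prod (w @ [k]) k"
  by (simp add: reduced_snoc_iff word_prod_snoc)

text \<open>Two reduced words of \<open>g\<close> with last letters \<open>s < t\<close>: both letters are descents of \<open>g\<close>,
  so \<open>g\<close> has a reduced word ending in the braid word of \<open>s\<close> and \<open>t\<close>, and dropping its last
  letter gives reduced words of \<open>g s\<^sub>s\<close> and \<open>g s\<^sub>t\<close>.\<close>

lemma reduced_snoc_distinct_connect:
  assumes ra: "reduced n (a @ [s])" and rb: "reduced n (b @ [t])"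
    and eq: "word_prod (a @ [s]) = word_prod (b @ [t])" and "s < t"
  obtains c where "t = Suc s"
      "reduced n (c @ [s, t])" "word_prod (c @ [s, t]) = word_prod a"
      "reduced n (c @ [t, s])" "word_prod (c @ [t, s]) = word_prod b"
    | c where "Suc s < t"
      "reduced n (c @ [t])" "word_prod (c @ [t]) = word_prod a"
      "reduced n (c @ [s])" "word_prod (c @ [s]) = word_prod b"
proof -
  define g where "g = word_prod (a @ [s])"
  have a: "word_prod a = g \<circ> adj_swap s" "s \<in> {1..<n}" "set a \<subseteq> {1..<n}"
    using ra by (simp_all add: g_def reduced_snoc_iff word_prod_snoc reduced_def)
  have "g = word_prod b \<circ> adj_swap t"
    unfolding g_def eq by (simp add: word_prod_snoc)
  then have b: "word_prod b = g \<circ> adj_swap t" "t \<in> {1..<n}"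
    using rb by (simp_all add: reduced_snoc_iff)
  have desc: "g (Suc s) < g s" "g (Suc t) < g t"
    using reduced_snoc_descent[OF ra] reduced_snoc_descent[OF rb] by (simp_all add: g_def eq)
  show thesis
  proof (cases "t = Suc s")
    case True
    obtain c where c: "reduced n c" "word_prod c = word_prod (a @ [t, s])"
      using exists_reduced_word[of "a @ [t, s]" n] a b by auto
    have "reduced n (c @ [s, t])" "word_prod (c @ [s, t]) = word_prod a"
      using c a b desc True
      by (auto simp: reduced_snoc_iff[of _ "c @ [s]", simplified] reduced_snoc_iff
          word_prod_append word_prod_Cons transpose_def)
    moreover have "reduced n (c @ [t, s])" "word_prod (c @ [t, s]) = word_prod b"
      using c a b desc True
      by (auto simp: reduced_snoc_iff[of _ "c @ [Suc s]", simplified] reduced_snoc_iff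
          word_prod_append word_prod_Cons transpose_def)
    ultimately show thesis
      using True that(1) by blast
  next
    case False
    with \<open>s < t\<close> have far: "Suc s < t" by simp
    obtain c where c: "reduced n c" "word_prod c = word_prod (a @ [t])"
      using exists_reduced_word[of "a @ [t]" n] a b by auto
    have "reduced n (c @ [t])" "word_prod (c @ [t]) = word_prod a"
      using c a b desc far
      by (auto simp: reduced_snoc_iff word_prod_snoc transpose_def)
    moreover have "reduced n (c @ [s])" "word_prod (c @ [s]) = word_prod b"
      using c a b desc far
      by (auto simp: reduced_snoc_iff word_prod_snoc transpose_def fun_eq_iff)
    ultimately show thesis
      using far that(2) by blast
  qed
qed

context
  fixes F :: "nat \<Rightarrow> 'a \<Rightarrow> 'a"
  assumes F_commute: "\<And>i j x. Suc i < j \<Longrightarrow> F i (F j x) = F j (F i x)"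
    and F_braid: "\<And>i x. F i (F (Suc i) (F i x)) = F (Suc i) (F i (F (Suc i) x))"
begin

lemma foldr_reduced_snoc_eq:
  assumes IH: "\<And>a b x. length a < N \<Longrightarrow> reduced n a \<Longrightarrow> reduced n b \<Longrightarrow>
      word_prod a = word_prod b \<Longrightarrow> foldr F a x = foldr F b x"
    and ra: "reduced n (a @ [s])" and rb: "reduced n (b @ [t])"
    and eq: "word_prod (a @ [s]) = word_prod (b @ [t])"
    and N: "length (a @ [s]) = N" and "s < t"
  shows "foldr F (a @ [s]) x = foldr F (b @ [t]) x"
proof -
  have len: "length a < N" "length b < N"
    using N ra rb eq by (simp_all add: reduced_def)
  have red: "reduced n a" "reduced n b"
    using ra rb by (simp_all add: reduced_snoc_iff)
  from ra rb eq \<open>s < t\<close> show ?thesis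
  proof (cases rule: reduced_snoc_distinct_connect)
    case (1 c)
    then have "foldr F a y = foldr F (c @ [s, t]) y" "foldr F b y = foldr F (c @ [t, s]) y" for y
      using IH[OF len(1) red(1)] IH[OF len(2) red(2)] by simp_all
    then show ?thesis
      using F_braid[of s x] 1(1) by simp
  next
    case (2 c)
    then have "foldr F a y = foldr F (c @ [t]) y" "foldr F b y = foldr F (c @ [s]) y" for y
      using IH[OF len(1) red(1)] IH[OF len(2) red(2)] by simp_all
    then show ?thesis
      using F_commute[OF 2(1), of x] by simp
  qed
qed

theorem foldr_reduced_words_eq:
  "reduced n a \<Longrightarrow> reduced n b \<Longrightarrow> word_prod a = word_prod b \<Longrightarrow> foldr F a x = foldr F b x"
proof (induction "length a" arbitrary: a b x rule: less_induct)
  case less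
  show ?case
  proof (cases a rule: rev_exhaust)
    case Nil
    then show ?thesis using less.prems by (simp add: reduced_def)
  next
    case (snoc a' s)
    then obtain b' t where b: "b = b' @ [t]"
      using less.prems by (cases b rule: rev_exhaust) (auto simp: reduced_def)
    have IH: "\<And>u v y. length u < length a \<Longrightarrow> reduced n u \<Longrightarrow> reduced n v \<Longrightarrow>
        word_prod u = word_prod v \<Longrightarrow> foldr F u y = foldr F v y"
      using less.hyps by blast
    consider "s = t" | "s < t" | "t < s" by linarith
    then show ?thesis
    proof cases
      case 1
      have "word_prod a' = word_prod b'"
        using less.prems(3) unfolding snoc b 1 word_prod_snoc by (metis comp_adj_swap_adj_swap)
      then show ?thesis
        using IH[of a' b'] less.prems snoc b 1 by (simp add: reduced_snoc_iff)
    next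
      case 2
      show ?thesis
        unfolding snoc b by (rule foldr_reduced_snoc_eq[OF IH]) (use less.prems snoc b 2 in simp_all)
    next
      case 3
      have "length b = length a"
        using less.prems by (simp add: reduced_def)
      show ?thesis
        unfolding snoc b
        by (rule foldr_reduced_snoc_eq[OF IH, symmetric])
           (use less.prems snoc b 3 \<open>length b = length a\<close> in simp_all)
    qed
  qed
qed

end

definition reversal :: "nat \<Rightarrow> nat \<Rightarrow> nat \<Rightarrow> nat" where
  "reversal m n j = (if m \<le> j \<and> j \<le> n then m + n - j else j)"

definition reversal_word :: "nat \<Rightarrow> nat \<Rightarrow> nat list" where
  "reversal_word m n = concat (map (\<lambda>j. rev [j..<n]) [m..<n])"

lemma longest_eq_reversal: "longest n = reversal 1 n"
  by (auto simp: fun_eq_iff longest_def reversal_def)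

lemma reversal_word_self [simp]: "reversal_word n n = []"
  by (simp add: reversal_word_def)

lemma reversal_word_step: "m < n \<Longrightarrow> reversal_word m n = rev [m..<n] @ reversal_word (Suc m) n"
  by (simp add: reversal_word_def upt_conv_Cons)

lemma set_reversal_word: "set (reversal_word m n) \<subseteq> {m..<n}"
  by (auto simp: reversal_word_def)

lemma word_prod_rev_upt:
  "m \<le> n \<Longrightarrow> word_prod (rev [m..<n]) j = (if j = m then n else if m < j \<and> j \<le> n then j - 1 else j)"
proof (induction n rule: dec_induct)
  case (step n)
  then show ?case by (auto simp: word_prod_Cons transpose_def)
qed simp

lemma word_prod_reversal_word: "m \<le> n \<Longrightarrow> word_prod (reversal_word m n) = reversal m n"
proof (induction m rule: inc_induct)
  case base
  have "reversal n n j = j" for j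
    by (cases "j = n") (simp_all add: reversal_def)
  then show ?case by (simp add: fun_eq_iff)
next
  case (step m)
  have "word_prod (rev [m..<n]) (reversal (Suc m) n j) = reversal m n j" for j
  proof -
    consider "j = m" | "Suc m \<le> j \<and> j \<le> n" | "j < m \<or> n < j" by linarith
    then show ?thesis
    proof cases
      case 2
      then have "reversal (Suc m) n j = Suc m + n - j" "m < Suc m + n - j" "Suc m + n - j \<le> n"
        by (auto simp: reversal_def)
      with 2 show ?thesis using step.hyps by (simp add: word_prod_rev_upt reversal_def)
    next
      case 3
      then have "reversal (Suc m) n j = j" "reversal m n j = j"
        by (auto simp: reversal_def)
      with 3 show ?thesis using step.hyps by (auto simp: word_prod_rev_upt)
    qed (use step.hyps in \<open>simp_all add: word_prod_rev_upt reversal_def\<close>)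
  qed
  then show ?case
    using step by (simp add: fun_eq_iff reversal_word_step word_prod_append)
qed

lemma length_reversal_word:
  "m \<le> n \<Longrightarrow> length (reversal_word m n) = card {(p, q). m \<le> p \<and> p < q \<and> q \<le> n}"
proof (induction m rule: inc_induct)
  case base
  have "{(p, q). n \<le> p \<and> p < q \<and> q \<le> n} = {}" by auto
  then show ?case by (simp only: reversal_word_self list.size card.empty)
next
  case (step m)
  have split: "{(p, q). m \<le> p \<and> p < q \<and> q \<le> n} =
      Pair m ` {m<..n} \<union> {(p, q). Suc m \<le> p \<and> p < q \<and> q \<le> n}"
    by auto
  have "finite {(p, q). Suc m \<le> p \<and> p < q \<and> q \<le> n}"
    by (rule finite_subset[of _ "{0..n} \<times> {0..n}"]) auto
  then have "card {(p, q). m \<le> p \<and> p < q \<and> q \<le> n} =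
      card (Pair m ` {m<..n}) + card {(p, q). Suc m \<le> p \<and> p < q \<and> q \<le> n}"
    unfolding split by (intro card_Un_disjoint) auto
  moreover have "card (Pair m ` {m<..n}) = n - m"
    by (simp add: card_image inj_on_def)
  ultimately show ?case
    using step by (simp add: reversal_word_step)
qed

lemma reduced_reversal_word: "reduced n (reversal_word 1 n)"
proof (cases "1 \<le> n")
  case True
  have "inversions n (reversal 1 n) = {(p, q). 1 \<le> p \<and> p < q \<and> q \<le> n}"
    by (auto simp: inversions_def reversal_def)
  then show ?thesis
    using True set_reversal_word[of 1 n]
    by (simp add: reduced_def word_prod_reversal_word length_reversal_word)
next
  case False
  then have "n = 0" by simp
  moreover have "inversions 0 id = {}" by (auto simp: inversions_def)
  ultimately show ?thesis by (simp add: reversal_word_def reduced_def)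
qed

lemma word_prod_reversal_word_longest: "word_prod (reversal_word 1 n) = longest n"
proof (cases "1 \<le> n")
  case False
  then show ?thesis by (simp add: reversal_word_def longest_def fun_eq_iff)
qed (simp add: word_prod_reversal_word longest_eq_reversal)

lemma reduced_word_longest_exists: "\<exists>w. reduced_word n (longest n) w"
proof -
  let ?P = "\<lambda>w. set w \<subseteq> {1..<n} \<and> word_prod w = longest n"
  have "?P (reversal_word 1 n)"
    using set_reversal_word word_prod_reversal_word_longest by auto
  then obtain w where "?P w" "\<forall>u. ?P u \<longrightarrow> length w \<le> length u"
    using ex_has_least_nat[of ?P _ length] by blast
  then show ?thesis unfolding reduced_word_def by blast
qed

lemma reduced_if_reduced_word:
  assumes w: "reduced_word n \<sigma> w"
  shows "reduced n w"
proof -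
  have range: "set w \<subseteq> {1..<n}"
    and minimal: "\<And>u. set u \<subseteq> {1..<n} \<Longrightarrow> word_prod u = \<sigma> \<Longrightarrow> length w \<le> length u"
    using w by (auto simp: reduced_word_def)
  obtain c where "reduced n c" "word_prod c = word_prod w"
    using exists_reduced_word[OF range] by blast
  then have "length w \<le> card (inversions n (word_prod w))"
    using minimal[of c] w by (auto simp: reduced_def reduced_word_def)
  then show ?thesis
    using card_inversions_le_length[OF range] range by (simp add: reduced_def)
qed

subsection \<open>Complete homogeneous symmetric polynomials\<close>

definition monomials_of_degree :: "nat \<Rightarrow> nat set \<Rightarrow> (nat \<Rightarrow>\<^sub>0 nat) set" where
  "monomials_of_degree d A = {m. Poly_Mapping.keys m \<subseteq> A \<and> (\<Sum>k\<in>A. Poly_Mapping.lookup m k) = d}"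

lemma complete_h_eq_sum: "complete_h d A = (\<Sum>m\<in>monomials_of_degree d A. frag_of m)"
  unfolding complete_h_def monomials_of_degree_def ..

lemma finite_monomials_of_degree:
  assumes "finite A"
  shows "finite (monomials_of_degree d A)"
proof -
  let ?restr = "\<lambda>m. restrict (Poly_Mapping.lookup m) A"
  have "?restr ` monomials_of_degree d A \<subseteq> PiE A (\<lambda>_. {0..d})"
    using assms member_le_sum[of _ A]
    by (fastforce simp: monomials_of_degree_def PiE_iff)
  then have "finite (?restr ` monomials_of_degree d A)"
    by (rule finite_subset) (simp add: assms finite_PiE)
  moreover have "inj_on ?restr (monomials_of_degree d A)"
  proof (rule inj_onI)
    fix a b assume ab: "a \<in> monomials_of_degree d A" "b \<in> monomials_of_degree d A" "?restr a = ?restr b"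
    show "a = b"
    proof (rule poly_mapping_eqI)
      fix k
      show "Poly_Mapping.lookup a k = Poly_Mapping.lookup b k"
      proof (cases "k \<in> A")
        case True
        then show ?thesis using ab(3) by (metis restrict_apply')
      next
        case False
        then have "k \<notin> Poly_Mapping.keys a" "k \<notin> Poly_Mapping.keys b"
          using ab(1,2) by (auto simp: monomials_of_degree_def)
        then show ?thesis by (simp add: not_in_keys_iff_lookup_eq_zero)
      qed
    qed
  qed
  ultimately show ?thesis by (rule finite_imageD)
qed

lemma swap_monom_monomials_of_degree:
  "m \<in> monomials_of_degree d A \<Longrightarrow> swap_monom k m \<in> monomials_of_degree d (adj_swap k ` A)"
  by (auto simp: monomials_of_degree_def keys_swap_monom lookup_swap_monom
      sum.reindex[OF inj_on_subset[OF inj_transpose]])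

lemma swap_poly_complete_h: "swap_poly k (complete_h d A) = complete_h d (adj_swap k ` A)"
proof -
  have "bij_betw (swap_monom k) (monomials_of_degree d A) (monomials_of_degree d (adj_swap k ` A))"
  proof (rule bij_betw_byWitness[where f' = "swap_monom k"])
    show "swap_monom k ` monomials_of_degree d (adj_swap k ` A) \<subseteq> monomials_of_degree d A"
      using swap_monom_monomials_of_degree[of _ d "adj_swap k ` A" k] by (auto simp: image_image)
  qed (use swap_monom_monomials_of_degree in auto)
  from sum.reindex_bij_betw[OF this, of frag_of] show ?thesis
    by (simp add: complete_h_eq_sum swap_poly_sum swap_poly_single)
qed

lemma swap_poly_complete_h_symmetric:
  "k \<in> A \<longleftrightarrow> Suc k \<in> A \<Longrightarrow> swap_poly k (complete_h d A) = complete_h d A"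
  by (simp add: swap_poly_complete_h)

lemma complete_h_0: "finite A \<Longrightarrow> complete_h 0 A = 1"
proof -
  assume A: "finite A"
  have "m = 0" if "m \<in> monomials_of_degree 0 A" for m
  proof (rule poly_mapping_eqI)
    fix k
    show "Poly_Mapping.lookup m k = Poly_Mapping.lookup 0 k"
      using that A by (cases "k \<in> A") (auto simp: monomials_of_degree_def in_keys_iff)
  qed
  then have "monomials_of_degree 0 A = {0}"
    by (auto simp: monomials_of_degree_def)
  then show ?thesis by (simp add: complete_h_eq_sum)
qed

lemma complete_h_Suc_empty: "complete_h (Suc e) {} = 0"
  by (simp add: complete_h_eq_sum monomials_of_degree_def)

lemma monomials_of_degree_Suc:
  assumes A: "finite A" and a: "a \<in> A"
  shows "monomials_of_degree (Suc e) A =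
    monomials_of_degree (Suc e) (A - {a}) \<union> (+) (Poly_Mapping.single a 1) ` monomials_of_degree e A"
    (is "_ = _ \<union> ?shift ` _")
proof -
  have degree: "(\<Sum>k\<in>A. Poly_Mapping.lookup m k) = Poly_Mapping.lookup m a +
      (\<Sum>k\<in>A - {a}. Poly_Mapping.lookup m k)" for m
    using A a by (simp add: sum.remove)
  show ?thesis
  proof (intro set_eqI iffI)
    fix m assume m: "m \<in> monomials_of_degree (Suc e) A"
    show "m \<in> monomials_of_degree (Suc e) (A - {a}) \<union> ?shift ` monomials_of_degree e A"
    proof (cases "Poly_Mapping.lookup m a = 0")
      case True
      then show ?thesis using m degree[of m] by (auto simp: monomials_of_degree_def in_keys_iff)
    next
      case False
      define m' where "m' = Poly_Mapping.update a (Poly_Mapping.lookup m a - 1) m"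
      have "m = ?shift m'"
        using False by (intro poly_mapping_eqI) (auto simp: m'_def lookup_add lookup_single lookup_update when_def)
      moreover have "m' \<in> monomials_of_degree e A"
        using m a degree[of m] degree[of m'] False
        by (auto simp: monomials_of_degree_def m'_def lookup_update in_keys_iff split: if_splits)
      ultimately show ?thesis by blast
    qed
  next
    fix m assume "m \<in> monomials_of_degree (Suc e) (A - {a}) \<union> ?shift ` monomials_of_degree e A"
    then show "m \<in> monomials_of_degree (Suc e) A"
    proof
      assume m: "m \<in> monomials_of_degree (Suc e) (A - {a})"
      then have "Poly_Mapping.lookup m a = 0"
        by (auto simp: monomials_of_degree_def in_keys_iff)
      then show ?thesis using m degree[of m] by (auto simp: monomials_of_degree_def)
    next
      assume "m \<in> ?shift ` monomials_of_degree e A"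
      then obtain m' where m': "m' \<in> monomials_of_degree e A" "m = ?shift m'" by blast
      have "(\<Sum>k\<in>A - {a}. Poly_Mapping.lookup m k) = (\<Sum>k\<in>A - {a}. Poly_Mapping.lookup m' k)"
        using m'(2) by (intro sum.cong) (simp_all add: lookup_add lookup_single)
      then have "(\<Sum>k\<in>A. Poly_Mapping.lookup m k) = Suc e"
        using m' degree[of m] degree[of m'] by (simp add: monomials_of_degree_def lookup_add)
      moreover have "Poly_Mapping.keys m \<subseteq> A"
        using m' a keys_add[of "Poly_Mapping.single a 1" m'] by (auto simp: monomials_of_degree_def)
      ultimately show ?thesis by (simp add: monomials_of_degree_def)
    qed
  qed
qed

lemma complete_h_Suc_remove:
  assumes A: "finite A" and a: "a \<in> A"
  shows "complete_h (Suc e) A = complete_h (Suc e) (A - {a}) + var a * complete_h e A"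
proof -
  let ?shift = "(+) (Poly_Mapping.single a 1) :: (nat \<Rightarrow>\<^sub>0 nat) \<Rightarrow> _"
  have "a \<in> Poly_Mapping.keys (?shift m)" for m
    by (simp add: in_keys_iff lookup_add lookup_single)
  then have disjoint: "monomials_of_degree (Suc e) (A - {a}) \<inter> ?shift ` monomials_of_degree e A = {}"
    by (auto simp: monomials_of_degree_def)
  have "complete_h (Suc e) A = complete_h (Suc e) (A - {a}) +
      (\<Sum>m\<in>?shift ` monomials_of_degree e A. frag_of m)"
    unfolding complete_h_eq_sum monomials_of_degree_Suc[OF A a]
    by (intro sum.union_disjoint finite_imageI finite_monomials_of_degree A disjoint finite_Diff)
  also have "(\<Sum>m\<in>?shift ` monomials_of_degree e A. frag_of m) = var a * complete_h e A"
    by (simp add: sum.reindex inj_on_def complete_h_eq_sum sum_distrib_left var_def mult_single)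
  finally show ?thesis .
qed

lemma complete_h_singleton: "complete_h e {b} = var b ^ e"
  by (induction e) (simp_all add: complete_h_0 complete_h_Suc_empty complete_h_Suc_remove[of "{b}" b])

lemma divdiff_complete_h:
  assumes S: "finite S" "k \<notin> S" "Suc k \<notin> S"
  shows "divdiff k (complete_h (Suc e) (insert k S)) = complete_h e (insert k (insert (Suc k) S))"
proof (rule divdiff_eqI)
  let ?B = "insert k (insert (Suc k) S)"
  have "adj_swap k ` insert k S = insert (Suc k) S"
    using S transpose_image_eq[of k S "Suc k"] by simp
  moreover have "complete_h (Suc e) ?B = complete_h (Suc e) (insert k S) + var (Suc k) * complete_h e ?B"
    and "complete_h (Suc e) ?B = complete_h (Suc e) (insert (Suc k) S) + var k * complete_h e ?B"
    using complete_h_Suc_remove[of ?B "Suc k" e] complete_h_Suc_remove[of ?B k e] S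
    by (simp_all add: insert_Diff_if insert_commute)
  ultimately show "complete_h (Suc e) (insert k S) - swap_poly k (complete_h (Suc e) (insert k S)) =
      simple_root k * complete_h e ?B"
    by (simp add: swap_poly_complete_h simple_root_def algebra_simps)
qed

lemma divdiff_complete_h_symmetric: "k \<in> A \<longleftrightarrow> Suc k \<in> A \<Longrightarrow> divdiff k (complete_h e A) = 0"
  by (simp add: divdiff_eq_0 swap_poly_complete_h_symmetric)

lemma divdiff_complete_h_upper:
  assumes "Suc k \<le> n"
  shows "divdiff k (complete_h (Suc e) {Suc k..n}) = - complete_h e {k..n}"
proof -
  let ?S = "{Suc (Suc k)..n}"
  have "adj_swap k ` ?S = ?S"
    by (rule transpose_image_eq) auto
  then have "adj_swap k ` insert k ?S = {Suc k..n}"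
    using assms by (auto simp: Icc_eq_insert_lb_nat[of "Suc k"])
  then have "complete_h (Suc e) {Suc k..n} = swap_poly k (complete_h (Suc e) (insert k ?S))"
    by (simp only: swap_poly_complete_h)
  then have "divdiff k (complete_h (Suc e) {Suc k..n}) = - divdiff k (complete_h (Suc e) (insert k ?S))"
    by (simp only: divdiff_swap_poly)
  also have "\<dots> = - complete_h e {k..n}"
    using assms by (simp add: divdiff_complete_h insert_commute Icc_eq_insert_lb_nat[symmetric])
  finally show ?thesis .
qed

lemma foldr_divdiff_var_power:
  "m \<le> k \<Longrightarrow> k - m \<le> d \<Longrightarrow> foldr divdiff (rev [m..<k]) (var m ^ d) = complete_h (d - (k - m)) {m..k}"
proof (induction k rule: dec_induct)
  case base
  then show ?case by (simp add: complete_h_singleton)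
next
  case (step k)
  have "d - (k - m) = Suc (d - (Suc k - m))" "{m..k} = insert k {m..<k}"
    using step by auto
  then have "foldr divdiff (rev [m..<k]) (var m ^ d) =
      complete_h (Suc (d - (Suc k - m))) (insert k {m..<k})"
    using step by simp
  moreover have "insert k (insert (Suc k) {m..<k}) = {m..Suc k}"
    using step by auto
  ultimately show ?case
    using step by (simp add: divdiff_complete_h)
qed

definition single_form :: "mpoly \<Rightarrow> nat \<Rightarrow> nat \<Rightarrow> mpoly" where
  "single_form p i = (\<lambda>l. if l = i then p else 0)"

text \<open>The form \<open>S\<^sub>0\<^sub>,\<^sub>i\<close> of the statement, with the sign written as \<open>(-1)\<^sup>l\<^sup>-\<^sup>i\<close>.\<close>

definition alternating_form :: "nat \<Rightarrow> nat \<Rightarrow> nat \<Rightarrow> mpoly" where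
  "alternating_form n i = (\<lambda>l. if i \<le> l \<and> l \<le> n then (-1) ^ (l - i) * complete_h (l - i) {l..n} else 0)"

definition staircase_from :: "nat \<Rightarrow> nat \<Rightarrow> mpoly" where
  "staircase_from m n = (\<Prod>k = m..n. var k ^ (n - k))"

lemma ddiff_single_form_one: "k \<noteq> i \<Longrightarrow> one_forms.ddiff k (single_form 1 i) = 0"
  by (auto simp: one_forms_ddiff single_form_def fun_eq_iff)

lemma ddiff_alternating_form:
  assumes "k < n"
  shows "one_forms.ddiff k (alternating_form n i) = 0"
proof -
  have "divdiff k (alternating_form n i l) -
      (if l = Suc k then swap_poly k (alternating_form n i k) else 0) = 0" for l
  proof (cases "l = Suc k")
    case False
    then have "k \<in> {l..n} \<longleftrightarrow> Suc k \<in> {l..n}"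
      using assms by auto
    with False show ?thesis
      by (simp add: alternating_form_def divdiff_sign divdiff_complete_h_symmetric)
  next
    case True
    consider "i \<le> k" | "i = Suc k" | "Suc k < i" by linarith
    then show ?thesis
    proof cases
      case 1
      then have "(-1::mpoly) ^ (Suc k - i) = - ((-1) ^ (k - i))" "Suc k - i = Suc (k - i)"
        by (simp_all add: Suc_diff_le)
      then show ?thesis
        using 1 True assms
        by (simp add: alternating_form_def divdiff_sign divdiff_minus divdiff_complete_h_upper swap_poly_sign
            swap_poly_complete_h_symmetric)
    qed (use True assms in \<open>simp_all add: alternating_form_def complete_h_0\<close>)
  qed
  then show ?thesis
    by (simp add: one_forms_ddiff fun_eq_iff)
qed

lemma foldr_ddiff_single_form_var_power:
  "m \<le> k \<Longrightarrow> k - m \<le> d \<Longrightarrow> foldr one_forms.ddiff (rev [m..<k]) (single_form (var m ^ d) m) =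
     (\<lambda>l. if m \<le> l \<and> l \<le> k then (-1) ^ (l - m) * complete_h (d - (k - l)) {l..k} else 0)"
proof (induction k rule: dec_induct)
  case base
  then show ?case by (auto simp: fun_eq_iff single_form_def complete_h_singleton)
next
  case (step k)
  let ?v = "\<lambda>k l. if m \<le> l \<and> l \<le> k then (-1) ^ (l - m) * complete_h (d - (k - l)) {l..k} else (0::mpoly)"
  have IH: "foldr one_forms.ddiff (rev [m..<k]) (single_form (var m ^ d) m) = ?v k"
    using step by simp
  have "divdiff k (?v k l) - (if l = Suc k then swap_poly k (?v k k) else 0) = ?v (Suc k) l" for l
  proof -
    consider "m \<le> l \<and> l \<le> k" | "l = Suc k" | "\<not> (m \<le> l \<and> l \<le> Suc k)" by linarith
    then show ?thesis
    proof cases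
      case 1
      then have "d - (k - l) = Suc (d - (Suc k - l))" "{l..k} = insert k {l..<k}"
          "insert k (insert (Suc k) {l..<k}) = {l..Suc k}"
        using step by auto
      then show ?thesis
        using 1 by (simp add: divdiff_sign divdiff_complete_h)
    next
      case 2
      have "(-1) ^ (Suc k - m) = - ((-1) ^ (k - m) :: mpoly)"
        using step by (simp add: Suc_diff_le)
      then show ?thesis
        using 2 step by (simp add: complete_h_singleton swap_poly_sign swap_poly_power swap_poly_var)
    qed auto
  qed
  then have "one_forms.ddiff k (?v k) = ?v (Suc k)"
    unfolding one_forms_ddiff by (intro ext)
  then show ?case
    using step by (simp add: IH)
qed

lemma staircase_from_self [simp]: "staircase_from n n = 1"
  by (simp add: staircase_from_def)

lemma staircase_from_step: "m < n \<Longrightarrow> staircase_from m n = var m ^ (n - m) * staircase_from (Suc m) n"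
  by (simp add: staircase_from_def Icc_eq_insert_lb_nat[of m n])

lemma single_form_mult: "single_form (p * q) i = (\<lambda>l. p * single_form q i l)"
  by (simp add: single_form_def fun_eq_iff)

lemma foldr_ddiff_staircase_step:
  assumes "m < n"
  defines "x \<equiv> var m ^ (n - m)"
  shows "foldr one_forms.ddiff (rev [m..<n])
      (\<lambda>l. x * (if i < Suc m then single_form 1 i else alternating_form n i) l) =
    (if i < m then single_form 1 i else alternating_form n i)"
proof -
  have top: "foldr divdiff (rev [m..<n]) x = 1"
    using foldr_divdiff_var_power[of m n "n - m"] assms by (simp add: complete_h_0)
  consider "i < m" | "i = m" | "m < i" by linarith
  then show ?thesis
  proof cases
    case 1
    then have "one_forms.ddiff k (single_form 1 i) = 0" if "k \<in> set (rev [m..<n])" for k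
      using that by (intro ddiff_single_form_one) auto
    with 1 show ?thesis
      using one_forms.foldr_ddiff_scale_of_ddiff_0[of "rev [m..<n]" "single_form 1 i" x] top by simp
  next
    case 2
    have "(\<lambda>l. x * single_form 1 m l) = single_form x m"
      by (simp add: single_form_def fun_eq_iff)
    moreover have "(if m \<le> l \<and> l \<le> n then (-1) ^ (l - m) * complete_h (n - m - (n - l)) {l..n} else 0) =
        alternating_form n m l" for l
      by (simp add: alternating_form_def)
    ultimately show ?thesis
      using 2 assms foldr_ddiff_single_form_var_power[of m n "n - m"] by (simp add: fun_eq_iff)
  next
    case 3
    have "one_forms.ddiff k (alternating_form n i) = 0" if "k \<in> set (rev [m..<n])" for k
      using that by (intro ddiff_alternating_form) auto
    with 3 show ?thesis
      using one_forms.foldr_ddiff_scale_of_ddiff_0[of "rev [m..<n]" "alternating_form n i" x] top by simp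
  qed
qed

lemma foldr_ddiff_staircase_from:
  assumes "m \<le> n" "i \<le> n"
  shows "foldr one_forms.ddiff (reversal_word m n) (single_form (staircase_from m n) i) =
    (if i < m then single_form 1 i else alternating_form n i)"
  using assms(1)
proof (induction m rule: inc_induct)
  case base
  have "single_form 1 n = alternating_form n n"
    by (simp add: single_form_def alternating_form_def fun_eq_iff complete_h_0)
  with assms(2) show ?case by auto
next
  case (step m)
  let ?x = "var m ^ (n - m)"
  let ?v = "if i < Suc m then single_form 1 i else alternating_form n i"
  have "swap_poly k ?x = ?x" if "k \<in> set (reversal_word (Suc m) n)" for k
    using that set_reversal_word[of "Suc m" n] by (auto simp: swap_poly_power swap_poly_var)
  then have "foldr one_forms.ddiff (reversal_word m n) (single_form (staircase_from m n) i) =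
      foldr one_forms.ddiff (rev [m..<n]) (\<lambda>l. ?x * ?v l)"
    using step by (simp add: reversal_word_step staircase_from_step single_form_mult
        one_forms.foldr_ddiff_scale_symmetric)
  also have "\<dots> = (if i < m then single_form 1 i else alternating_form n i)"
    using foldr_ddiff_staircase_step[OF step(2)] by simp
  finally show ?case .
qed

lemma omega_times_eq_one_form: "omega_times p i = one_form (single_form p i)"
proof
  fix T
  show "omega_times p i T = one_form (single_form p i) T"
  proof (cases "card T = 1")
    case True
    then obtain l where "T = {l}" by (rule card_1_singletonE)
    then show ?thesis by (simp add: omega_times_def single_form_def)
  qed (auto simp: omega_times_def one_form_def)
qed

lemma foldr_demazure_one_form: "foldr demazure w (one_form v) = one_form (foldr one_forms.ddiff w v)"
  by (induction w) (simp_all add: demazure_one_form)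

lemma one_form_alternating_form:
  "(\<lambda>T. \<Sum>l = i..n. omega_times ((-1) ^ (l + i) * complete_h (l - i) {l..n}) l T) =
      one_form (alternating_form n i)"
proof
  fix T
  have sign: "(-1::mpoly) ^ (l + i) = (-1) ^ (l - i)" if "i \<le> l" for l
    using that by (metis le_add_diff_inverse2 power_add add.commute minus_one_power_iff even_add)
  show "(\<Sum>l = i..n. omega_times ((-1) ^ (l + i) * complete_h (l - i) {l..n}) l T) =
      one_form (alternating_form n i) T"
  proof (cases "card T = 1")
    case True
    then obtain l where "T = {l}" by (rule card_1_singletonE)
    then show ?thesis by (simp add: omega_times_def alternating_form_def sign)
  next
    case False
    then have "T \<noteq> {l}" for l by auto
    with False show ?thesis by (simp add: omega_times_def one_form_def)
  qed
qed

theorem lemma2p2: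
  fixes n i :: nat
  assumes "1 \<le> i" and "i \<le> n"
  shows "demazure_perm n (longest n) (omega_times (staircase n) i) =
         (\<lambda>T. \<Sum>l = i..n. omega_times ((-1) ^ (l + i) * complete_h (l - i) {l..n}) l T)"
proof -
  define w where "w = (SOME w. reduced_word n (longest n) w)"
  have w: "reduced_word n (longest n) w"
    unfolding w_def using reduced_word_longest_exists by (rule someI_ex)
  have same_prod: "word_prod w = word_prod (reversal_word 1 n)"
    using w unfolding word_prod_reversal_word_longest by (simp add: reduced_word_def)
  have "foldr one_forms.ddiff w v = foldr one_forms.ddiff (reversal_word 1 n) v" for v
    using foldr_reduced_words_eq[where F = one_forms.ddiff, OF one_forms.ddiff_commute one_forms.ddiff_braid
        reduced_if_reduced_word[OF w] reduced_reversal_word same_prod] .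
  moreover have "staircase n = staircase_from 1 n"
    by (simp add: staircase_def staircase_from_def)
  ultimately have "demazure_perm n (longest n) (omega_times (staircase n) i) =
      one_form (foldr one_forms.ddiff (reversal_word 1 n) (single_form (staircase_from 1 n) i))"
    by (simp add: demazure_perm_def w_def omega_times_eq_one_form foldr_demazure_one_form)
  also have "\<dots> = one_form (alternating_form n i)"
    using assms by (simp add: foldr_ddiff_staircase_from)
  finally show ?thesis by (simp add: one_form_alternating_form)
qed

end
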